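(* Let $n\ge 2$ and $\alpha\in[0,1]$. If $T$ is a tree of order $n$, then \[ \rho(A_\alpha(T))\le\frac{\alpha n+\sqrt{\alpha^2n^2+4(n-1)(1-2\alpha)}}{2}, \] with equality if and only if $T$ is the star $K_{1,n-1}$.
   Context: For a graph $G$ let $A(G)$ be its adjacency matrix and $D(G)$ the diagonal matrix of its vertex degrees. For $\alpha\in[0,1]$ define $A_\alpha(G)=\alpha D(G)+(1-\alpha)A(G)$. $\rho(M)$ denotes the spectral radius (largest eigenvalue) of a real symmetric nonnegative matrix $M$. *)

theory Defs
  imports "HOL-Analysis.Analysis"
begin

definition simple_graph :: "('v \<Rightarrow> 'v \<Rightarrow> bool) \<Rightarrow> bool" where
  "simple_graph E \<longleftrightarrow> (\<forall>u v. E u v \<longrightarrow> E v u) \<and> (\<forall>u. \<not> E u u)"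

definition connected_graph :: "('v \<Rightarrow> 'v \<Rightarrow> bool) \<Rightarrow> bool" where
  "connected_graph E \<longleftrightarrow> (\<forall>u v. E\<^sup>*\<^sup>* u v)"

definition is_cycle :: "('v \<Rightarrow> 'v \<Rightarrow> bool) \<Rightarrow> 'v list \<Rightarrow> bool" where
  "is_cycle E vs \<longleftrightarrow> length vs \<ge> 3 \<and> distinct vs \<and>
     (\<forall>i. i + 1 < length vs \<longrightarrow> E (vs ! i) (vs ! (i + 1))) \<and> E (last vs) (hd vs)"

definition is_tree :: "('v \<Rightarrow> 'v \<Rightarrow> bool) \<Rightarrow> bool" where
  "is_tree E \<longleftrightarrow> simple_graph E \<and> connected_graph E \<and> (\<nexists>vs. is_cycle E vs)"

definition is_star :: "('v \<Rightarrow> 'v \<Rightarrow> bool) \<Rightarrow> bool" where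
  "is_star E \<longleftrightarrow> (\<exists>c. \<forall>u v. E u v \<longleftrightarrow> u \<noteq> v \<and> (u = c \<or> v = c))"

definition degree :: "('v::finite \<Rightarrow> 'v \<Rightarrow> bool) \<Rightarrow> 'v \<Rightarrow> nat" where
  "degree E u = card {v. E u v}"

definition adj_matrix :: "('v::finite \<Rightarrow> 'v \<Rightarrow> bool) \<Rightarrow> real^'v^'v" where
  "adj_matrix E = (\<chi> i j. if E i j then 1 else 0)"

definition deg_matrix :: "('v::finite \<Rightarrow> 'v \<Rightarrow> bool) \<Rightarrow> real^'v^'v" where
  "deg_matrix E = (\<chi> i j. if i = j then real (degree E i) else 0)"

definition A_alpha :: "real \<Rightarrow> ('v::finite \<Rightarrow> 'v \<Rightarrow> bool) \<Rightarrow> real^'v^'v" where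
  "A_alpha \<alpha> E = \<alpha> *\<^sub>R deg_matrix E + (1 - \<alpha>) *\<^sub>R adj_matrix E"

text \<open>Spectral radius of a real symmetric matrix = its largest (real) eigenvalue.\<close>
definition spectral_radius_sym :: "real^'n^'n \<Rightarrow> real" where
  "spectral_radius_sym M = Max {l. \<exists>x. x \<noteq> 0 \<and> M *v x = l *\<^sub>R x}"

end

theory Submission
  imports Defs
begin

text \<open>Let \<open>y\<close> be an eigenvector for \<open>\<rho> = \<rho>(A\<^sub>\<alpha>(T))\<close>, scaled so that its largest entry \<open>y u\<close>
  is positive; write \<open>N = n - 1\<close> and \<open>d v\<close> for the degrees. The eigenequations give
  \<open>y v \<le> (1 - \<alpha>) y u d v / (\<rho> - \<alpha> d v)\<close> at every vertex, hence
  \<open>\<rho> - \<alpha> d u \<le> (1 - \<alpha>)\<^sup>2 \<Sum>{d v / (\<rho> - \<alpha> d v) | v adjacent to u}\<close>. Bounding the convex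
  function \<open>t / (\<rho> - \<alpha> t)\<close> on \<open>[1, N]\<close> by its chord, and using that the degrees of the
  neighbours of \<open>u\<close> sum to at most \<open>N\<close> in a tree, this becomes
  \<open>(\<rho> - \<alpha>) (\<rho> - \<alpha> N) \<le> (1 - \<alpha>)\<^sup>2 N\<close>, whose larger root is the bound, attained by the star.
  Equality forces every vertex to lie within distance two of \<open>u\<close>, with \<open>y\<close> maximal at distance
  two; running the argument again from such a vertex shows that \<open>T\<close> is a star.\<close>

lemma symmetric_matrix_inner_commute:
  fixes M :: "real^'n^'n"
  assumes "transpose M = M"
  shows "(M *v x) \<bullet> y = x \<bullet> (M *v y)"
  by (metis assms dot_lmul_matrix transpose_matrix_vector)

lemma linear_le_quadratic_imp_zero:
  fixes p c :: real
  assumes "\<And>t. 2 * t * p \<le> t\<^sup>2 * c"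
  shows "p = 0"
proof -
  define K where "K = \<bar>c\<bar> + 1"
  have K: "K > 0" "c < 2 * K" unfolding K_def by auto
  have "2 * (p / K) * p \<le> (p / K)\<^sup>2 * c" by (rule assms)
  hence "p\<^sup>2 * (2 * K - c) \<le> 0"
    using K by (simp add: field_simps power2_eq_square)
  hence "p\<^sup>2 \<le> 0" using K by (simp add: mult_le_0_iff)
  thus ?thesis by simp
qed

text \<open>A maximiser of the Rayleigh quotient on the unit sphere is an eigenvector.\<close>
lemma symmetric_matrix_has_eigenvector:
  fixes M :: "real^'n^'n"
  assumes sym: "transpose M = M"
  shows "\<exists>l x. x \<noteq> 0 \<and> M *v x = l *\<^sub>R x"
proof -
  define q where "q y = y \<bullet> (M *v y)" for y :: "real^'n"
  obtain b :: "real^'n" where "b \<in> Basis" using nonempty_Basis by blast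
  hence "sphere (0::real^'n) 1 \<noteq> {}" by force
  moreover have "continuous_on (sphere 0 1) q"
    unfolding q_def by (intro continuous_intros)
  ultimately obtain x where x: "x \<in> sphere 0 1" and xmax: "\<And>y. y \<in> sphere 0 1 \<Longrightarrow> q y \<le> q x"
    using continuous_attains_sup[OF compact_sphere] by blast
  define \<mu> where "\<mu> = q x"
  have xx: "x \<bullet> x = 1" using x by (simp add: dot_square_norm)
  have q_le: "q y \<le> \<mu> * (y \<bullet> y)" for y
  proof (cases "y = 0")
    case True then show ?thesis by (simp add: q_def)
  next
    case False
    hence "q ((1 / norm y) *\<^sub>R y) \<le> \<mu>" using xmax \<mu>_def by simp
    hence "q y \<le> \<mu> * (norm y)\<^sup>2"
      using False by (simp add: q_def matrix_vector_mult_scaleR field_simps power2_eq_square)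
    then show ?thesis by (simp add: dot_square_norm)
  qed
  define w where "w = M *v x - \<mu> *\<^sub>R x"
  have "2 * t * (w \<bullet> w) \<le> t\<^sup>2 * (\<mu> * (w \<bullet> w) - q w)" for t
  proof -
    have "w \<bullet> (M *v x) = x \<bullet> (M *v w)"
      by (metis sym symmetric_matrix_inner_commute inner_commute)
    moreover have "w \<bullet> (M *v x) - \<mu> * (x \<bullet> w) = w \<bullet> w"
      unfolding w_def by (simp add: inner_commute algebra_simps)
    moreover have "q (x + t *\<^sub>R w) \<le> \<mu> * ((x + t *\<^sub>R w) \<bullet> (x + t *\<^sub>R w))" by (rule q_le)
    ultimately show ?thesis
      using xx unfolding q_def \<mu>_def
      by (simp add: inner_commute power2_eq_square algebra_simps)
  qed
  hence "w \<bullet> w = 0" by (rule linear_le_quadratic_imp_zero)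
  hence "M *v x = \<mu> *\<^sub>R x" unfolding w_def by simp
  moreover have "x \<noteq> 0" using xx by auto
  ultimately show ?thesis by blast
qed

lemma symmetric_matrix_finite_eigenvalues:
  fixes M :: "real^'n^'n"
  assumes sym: "transpose M = M"
  shows "finite {l. \<exists>x. x \<noteq> 0 \<and> M *v x = l *\<^sub>R x}" (is "finite ?S")
proof (rule ccontr)
  assume "infinite ?S"
  then obtain S where S: "S \<subseteq> ?S" "finite S" "card S = CARD('n) + 1"
    using infinite_arbitrarily_large by blast
  define e where "e l = (SOME x. x \<noteq> 0 \<and> M *v x = l *\<^sub>R x)" for l
  have e: "e l \<noteq> 0" "M *v e l = l *\<^sub>R e l" if "l \<in> S" for l
    using someI_ex[of "\<lambda>x. x \<noteq> 0 \<and> M *v x = l *\<^sub>R x"] that S(1) unfolding e_def by auto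
  have orth: "e l \<bullet> e l' = 0" if "l \<in> S" "l' \<in> S" "l \<noteq> l'" for l l'
  proof -
    have "l * (e l \<bullet> e l') = (M *v e l) \<bullet> e l'" using e(2)[OF that(1)] by simp
    also have "\<dots> = e l \<bullet> (M *v e l')" by (rule symmetric_matrix_inner_commute[OF sym])
    also have "\<dots> = l' * (e l \<bullet> e l')" using e(2)[OF that(2)] by simp
    finally show ?thesis using that(3) by simp
  qed
  have inj: "inj_on e S"
    by (rule inj_onI) (metis e(1) inner_eq_zero_iff orth)
  have "pairwise orthogonal (e ` S)"
    unfolding pairwise_def orthogonal_def using orth by blast
  moreover have "0 \<notin> e ` S" using e(1) by auto
  ultimately have "independent (e ` S)" by (rule pairwise_orthogonal_independent)
  hence "card (e ` S) \<le> CARD('n)" using independent_bound by fastforce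
  thus False using card_image[OF inj] S(3) by simp
qed

lemma spectral_radius_sym_eigenvalue:
  fixes M :: "real^'n^'n"
  assumes "transpose M = M"
  shows "\<exists>x. x \<noteq> 0 \<and> M *v x = spectral_radius_sym M *\<^sub>R x"
    and "x \<noteq> 0 \<Longrightarrow> M *v x = l *\<^sub>R x \<Longrightarrow> l \<le> spectral_radius_sym M"
  using Max_in[OF symmetric_matrix_finite_eigenvalues[OF assms]] Max_ge[OF symmetric_matrix_finite_eigenvalues[OF assms]]
    symmetric_matrix_has_eigenvector[OF assms]
  unfolding spectral_radius_sym_def by blast+

text \<open>For \<open>1 \<le> t \<le> N\<close> the convex function \<open>t / (l - \<alpha> t)\<close> lies below its chord.\<close>
lemma ratio_le_chord:
  fixes N t \<alpha> l :: real
  assumes "1 \<le> t" "t \<le> N" "0 \<le> \<alpha>" "\<alpha> * N < l"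
  shows "(N - 1) * (t / (l - \<alpha> * t)) \<le> (N - t) / (l - \<alpha>) + N * (t - 1) / (l - \<alpha> * N)"
proof -
  define a b c where "a = l - \<alpha>" and "b = l - \<alpha> * N" and "c = l - \<alpha> * t"
  have "\<alpha> * t \<le> \<alpha> * N" "\<alpha> * 1 \<le> \<alpha> * t" using assms by (intro mult_left_mono; simp)+
  hence pos: "a > 0" "b > 0" "c > 0" and "l \<ge> 0"
    using assms unfolding a_def b_def c_def by (auto intro: order.trans[OF \<open>0 \<le> \<alpha>\<close>])
  have "(N - t) / a + N * (t - 1) / b - (N - 1) * (t / c)
      = ((N - t) * b * c + N * (t - 1) * a * c - (N - 1) * t * a * b) / (a * b * c)"
    using pos by (simp add: field_simps)
  also have "\<dots> = (N - 1) * \<alpha> * l * (t - 1) * (N - t) / (a * b * c)"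
    unfolding a_def b_def c_def by (simp add: algebra_simps)
  also have "\<dots> \<ge> 0"
    using assms pos \<open>l \<ge> 0\<close> by (intro divide_nonneg_pos mult_nonneg_nonneg) auto
  finally show ?thesis unfolding a_def b_def c_def by simp
qed

text \<open>\<open>poly\<close> is the characteristic polynomial of the quotient matrix
  \<open>[\<alpha>N, (1-\<alpha>)N; 1-\<alpha>, \<alpha>]\<close> of \<open>A\<^sub>\<alpha>\<close> of the star with \<open>N\<close> leaves, and \<open>root\<close> its
  larger root; \<open>discr\<close> is written so that \<open>root\<close> matches the bound of the theorem for \<open>n = N + 1\<close>.\<close>
locale star_quadratic =
  fixes N \<alpha> :: real
  assumes N_ge_1: "1 \<le> N" and alpha_nonneg: "0 \<le> \<alpha>" and alpha_le_1: "\<alpha> \<le> 1"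
begin

definition discr :: real where "discr = \<alpha>\<^sup>2 * (N + 1)\<^sup>2 + 4 * N * (1 - 2 * \<alpha>)"

definition root :: real where "root = (\<alpha> * (N + 1) + sqrt discr) / 2"

definition poly :: "real \<Rightarrow> real" where "poly l = (l - \<alpha>) * (l - \<alpha> * N) - (1 - \<alpha>)\<^sup>2 * N"

lemma discr_eq: "discr = (\<alpha> * (N - 1))\<^sup>2 + 4 * N * (1 - \<alpha>)\<^sup>2"
  unfolding discr_def by (simp add: algebra_simps power2_eq_square)

lemma discr_nonneg: "0 \<le> discr"
  unfolding discr_eq using N_ge_1 by simp

lemma poly_eq: "poly l = (l - \<alpha> * (N + 1) / 2)\<^sup>2 - discr / 4"
  unfolding poly_def discr_def power2_eq_square by (simp add: field_simps)

lemma poly_root: "poly root = 0"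
proof -
  have "(root - \<alpha> * (N + 1) / 2)\<^sup>2 = (sqrt discr)\<^sup>2 / 4"
    unfolding root_def by (simp add: field_simps power2_eq_square)
  thus ?thesis unfolding poly_eq using discr_nonneg by simp
qed

lemma le_root_if_poly_nonpos:
  assumes "poly l \<le> 0"
  shows "l \<le> root"
proof -
  have "(l - \<alpha> * (N + 1) / 2)\<^sup>2 \<le> (sqrt discr / 2)\<^sup>2"
    using assms discr_nonneg unfolding poly_eq by (simp add: power_divide)
  hence "l - \<alpha> * (N + 1) / 2 \<le> sqrt discr / 2"
    by (rule power2_le_imp_le) (simp add: discr_nonneg)
  thus ?thesis unfolding root_def by simp
qed

lemma root_gt:
  assumes "\<alpha> < 1"
  shows "\<alpha> * N < root"
proof -
  have "(\<alpha> * (N - 1))\<^sup>2 < discr" unfolding discr_eq using N_ge_1 assms by simp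
  hence "\<alpha> * (N - 1) < sqrt discr"
    using real_sqrt_less_mono alpha_nonneg N_ge_1 by fastforce
  thus ?thesis unfolding root_def by (simp add: algebra_simps)
qed

lemma root_eq_N:
  assumes "\<alpha> = 1 \<or> N = 1"
  shows "root = N"
proof -
  have "discr = (N - 1 + 2 * (1 - \<alpha>))\<^sup>2"
    using assms unfolding discr_eq by (auto simp: power2_eq_square algebra_simps)
  moreover have "0 \<le> N - 1 + 2 * (1 - \<alpha>)" using N_ge_1 alpha_le_1 by simp
  ultimately show ?thesis using assms unfolding root_def by auto
qed

lemma poly_decomposition:
  assumes "l \<noteq> \<alpha>" "l \<noteq> \<alpha> * N"
  shows "(N - 1) * (l - \<alpha> * k) - (1 - \<alpha>)\<^sup>2 * ((k * N - s) / (l - \<alpha>) + N * (s - k) / (l - \<alpha> * N))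
    = poly l * ((N - k) * (l - \<alpha>) + (k - 1) * (l - \<alpha> * N)) / ((l - \<alpha>) * (l - \<alpha> * N))
      + (1 - \<alpha>)\<^sup>2 * (N - s) * (N / (l - \<alpha> * N) - 1 / (l - \<alpha>))"
proof -
  define a b where "a = l - \<alpha>" and "b = l - \<alpha> * N"
  have ab: "a \<noteq> 0" "b \<noteq> 0" using assms unfolding a_def b_def by auto
  have "(N - 1) * (l - \<alpha> * k) - (1 - \<alpha>)\<^sup>2 * ((k * N - s) / a + N * (s - k) / b)
      = ((N - 1) * (l - \<alpha> * k) * (a * b) - (1 - \<alpha>)\<^sup>2 * ((k * N - s) * b + N * (s - k) * a)) / (a * b)"
    using ab by (simp add: field_simps)
  also have "\<dots> = (poly l * ((N - k) * a + (k - 1) * b) + (1 - \<alpha>)\<^sup>2 * (N - s) * (N * a - b)) / (a * b)"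
    unfolding poly_def a_def b_def by (simp add: algebra_simps power2_eq_square)
  also have "\<dots> = poly l * ((N - k) * a + (k - 1) * b) / (a * b) + (1 - \<alpha>)\<^sup>2 * (N - s) * (N / b - 1 / a)"
    using ab by (simp add: field_simps)
  finally show ?thesis unfolding a_def b_def .
qed

text \<open>Applied with \<open>d\<close> the degrees of the neighbours \<open>V\<close> of a vertex where an eigenvector is
  maximal: \<open>est\<close> comes from the eigenequations and \<open>sum d V \<le> N\<close> holds in a tree.\<close>
lemma neighbour_degree_estimate:
  fixes d :: "'a \<Rightarrow> real"
  assumes "finite V" "1 < N" "\<alpha> < 1" "\<alpha> * N < l"
    and d: "\<And>v. v \<in> V \<Longrightarrow> 1 \<le> d v \<and> d v \<le> N" and s: "sum d V \<le> N"
    and est: "l - \<alpha> * card V \<le> (1 - \<alpha>)\<^sup>2 * (\<Sum>v\<in>V. d v / (l - \<alpha> * d v))"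
  shows "poly l \<le> 0"
    and "poly l = 0 \<Longrightarrow> sum d V = N \<and> l - \<alpha> * card V = (1 - \<alpha>)\<^sup>2 * (\<Sum>v\<in>V. d v / (l - \<alpha> * d v))"
proof -
  define k where "k = real (card V)"
  define a b where "a = l - \<alpha>" and "b = l - \<alpha> * N"
  define q where "q = ((N - k) * a + (k - 1) * b) / (a * b)"
  define G where "G = (\<Sum>v\<in>V. d v / (l - \<alpha> * d v))"
  define slack where "slack = (1 - \<alpha>)\<^sup>2 * G - (l - \<alpha> * k)"
  define Z where "Z = (N - sum d V) * (N / b - 1 / a)"
  have "\<alpha> * 1 \<le> \<alpha> * N" using N_ge_1 alpha_nonneg by (rule mult_left_mono)
  hence ab: "0 < b" "b \<le> a" using assms unfolding a_def b_def by auto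
  have "k \<le> sum d V" unfolding k_def using d sum_mono[of V "\<lambda>_. 1" d] by simp
  hence "k \<le> N" using s by simp
  have "(N - 1) * G \<le> (\<Sum>v\<in>V. (N - d v) / a + N * (d v - 1) / b)"
    unfolding G_def sum_distrib_left a_def b_def
    using d alpha_nonneg assms(4) by (intro sum_mono ratio_le_chord) auto
  also have "\<dots> = (k * N - sum d V) / a + N * (sum d V - k) / b"
    unfolding k_def by (simp add: sum.distrib sum_subtractf sum_divide_distrib[symmetric]
        sum_distrib_left[symmetric] algebra_simps)
  finally have chord: "(N - 1) * G \<le> (k * N - sum d V) / a + N * (sum d V - k) / b" .
  moreover have "(N - 1) * (l - \<alpha> * k) - (1 - \<alpha>)\<^sup>2 * ((k * N - sum d V) / a + N * (sum d V - k) / b)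
      = poly l * q + (1 - \<alpha>)\<^sup>2 * Z"
    using poly_decomposition[of l k "sum d V"] ab unfolding q_def Z_def a_def b_def by simp
  moreover have "(N - 1) * (l - \<alpha> * k) = (N - 1) * ((1 - \<alpha>)\<^sup>2 * G) - (N - 1) * slack"
    unfolding slack_def by (simp add: algebra_simps)
  ultimately have key: "poly l * q + (1 - \<alpha>)\<^sup>2 * Z + (N - 1) * slack \<le> 0"
    using chord mult_left_mono[OF chord, of "(1 - \<alpha>)\<^sup>2"] by (simp add: algebra_simps)
  have "(N - k) * b + (k - 1) * b \<le> (N - k) * a + (k - 1) * b"
    using \<open>k \<le> N\<close> ab by (simp add: mult_left_mono)
  moreover have "(N - k) * b + (k - 1) * b = (N - 1) * b" by (simp add: algebra_simps)
  moreover have "0 < (N - 1) * b" using assms(2) ab by simp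
  ultimately have "0 < q"
    unfolding q_def using ab by (intro divide_pos_pos) auto
  moreover have "0 < N / b - 1 / a"
    using ab assms(2) frac_le[of 1 1 b a] divide_strict_right_mono[of 1 N b] by simp
  hence "0 \<le> Z" unfolding Z_def using s by simp
  moreover have "0 \<le> slack" unfolding slack_def k_def G_def using est by simp
  ultimately have rest: "0 \<le> (1 - \<alpha>)\<^sup>2 * Z" "0 \<le> (N - 1) * slack"
    using assms(2) by simp_all
  hence "poly l * q \<le> 0" using key by linarith
  thus "poly l \<le> 0" using \<open>0 < q\<close> by (simp add: mult_le_0_iff)
  assume "poly l = 0"
  hence "(1 - \<alpha>)\<^sup>2 * Z + (N - 1) * slack \<le> 0" using key by simp
  hence "(1 - \<alpha>)\<^sup>2 * Z = 0" and "(N - 1) * slack = 0" using rest by linarith+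
  hence "Z = 0" "slack = 0" using assms(2,3) by auto
  thus "sum d V = N \<and> l - \<alpha> * card V = (1 - \<alpha>)\<^sup>2 * (\<Sum>v\<in>V. d v / (l - \<alpha> * d v))"
    using \<open>0 < N / b - 1 / a\<close> unfolding Z_def slack_def k_def G_def by simp
qed

end

lemma A_alpha_mult_vec_nth:
  fixes E :: "'v::finite \<Rightarrow> 'v \<Rightarrow> bool"
  shows "(A_alpha \<alpha> E *v x) $ i = \<alpha> * degree E i * x $ i + (1 - \<alpha>) * (\<Sum>j | E i j. x $ j)"
proof -
  have "(A_alpha \<alpha> E *v x) $ i
      = (\<Sum>j\<in>UNIV. (if i = j then \<alpha> * degree E i * x $ j else 0) + (if E i j then (1 - \<alpha>) * x $ j else 0))"
    unfolding A_alpha_def deg_matrix_def adj_matrix_def matrix_vector_mult_def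
    by (auto simp: algebra_simps intro!: sum.cong)
  also have "\<dots> = \<alpha> * degree E i * x $ i + (1 - \<alpha>) * (\<Sum>j | E i j. x $ j)"
    by (simp add: sum.distrib sum.If_cases sum_distrib_left Int_def)
  finally show ?thesis .
qed

lemma A_alpha_symmetric:
  "symp E \<Longrightarrow> transpose (A_alpha \<alpha> E) = A_alpha \<alpha> E"
  unfolding transpose_def A_alpha_def deg_matrix_def adj_matrix_def
  by (auto simp: vec_eq_iff dest: sympD)

lemma eigenvector_with_positive_maximum:
  fixes M :: "real^'n^'n"
  assumes "x \<noteq> 0" "M *v x = l *\<^sub>R x"
  obtains y u where "M *v y = l *\<^sub>R y" "0 < y $ u" "\<And>i. y $ i \<le> y $ u"
proof -
  define m where "m = Max (range (\<lambda>i. \<bar>x $ i\<bar>))"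
  have "m \<in> range (\<lambda>i. \<bar>x $ i\<bar>)" unfolding m_def by (rule Max_in) auto
  then obtain u where "m = \<bar>x $ u\<bar>" by blast
  moreover have "\<bar>x $ i\<bar> \<le> m" for i unfolding m_def by (rule Max_ge) auto
  ultimately have u: "\<bar>x $ i\<bar> \<le> \<bar>x $ u\<bar>" for i by simp
  have "x $ u \<noteq> 0"
  proof
    assume "x $ u = 0"
    hence "x $ i = 0" for i using u[of i] by simp
    thus False using assms(1) by (simp add: vec_eq_iff)
  qed
  show ?thesis
  proof (cases "0 < x $ u")
    case True
    then show ?thesis using that[of x u] assms(2) u by (simp add: abs_le_iff)
  next
    case False
    have "M *v (- x) = l *\<^sub>R (- x)"
      using assms(2) by (simp add: vec_eq_iff matrix_vector_mult_def sum_negf)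
    then show ?thesis
      using that[of "- x" u] u False \<open>x $ u \<noteq> 0\<close> by (simp add: abs_le_iff)
  qed
qed

lemma A_alpha_eigenvector_nth:
  fixes E :: "'v::finite \<Rightarrow> 'v \<Rightarrow> bool"
  assumes "A_alpha \<alpha> E *v y = l *\<^sub>R y"
  shows "l * y $ i = \<alpha> * degree E i * y $ i + (1 - \<alpha>) * (\<Sum>j | E i j. y $ j)"
  using arg_cong[OF assms, of "\<lambda>x. x $ i"] by (simp add: A_alpha_mult_vec_nth)

lemma A_alpha_eigenvalue_le_degree:
  fixes E :: "'v::finite \<Rightarrow> 'v \<Rightarrow> bool"
  assumes "A_alpha \<alpha> E *v y = l *\<^sub>R y" "0 < y $ u" "\<And>i. y $ i \<le> y $ u" "\<alpha> \<le> 1"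
  shows "l \<le> degree E u"
proof -
  have "(\<Sum>j | E u j. y $ j) \<le> degree E u * y $ u"
    using sum_mono[of "{j. E u j}" "\<lambda>j. y $ j" "\<lambda>_. y $ u"] assms(3) by (simp add: degree_def)
  hence "l * y $ u \<le> \<alpha> * degree E u * y $ u + (1 - \<alpha>) * (degree E u * y $ u)"
    using A_alpha_eigenvector_nth[OF assms(1), of u] assms(4) by (simp add: mult_left_mono)
  thus ?thesis using assms(2) by (simp add: algebra_simps)
qed

lemma A_alpha_eigenvector_le:
  fixes E :: "'v::finite \<Rightarrow> 'v \<Rightarrow> bool" and \<alpha> l m :: real
  assumes "A_alpha \<alpha> E *v y = l *\<^sub>R y" "\<And>i. y $ i \<le> m" "\<alpha> \<le> 1" "\<alpha> * degree E v < l"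
  shows "y $ v \<le> (1 - \<alpha>) * m * (degree E v / (l - \<alpha> * degree E v))"
proof -
  have "(l - \<alpha> * degree E v) * y $ v = (1 - \<alpha>) * (\<Sum>j | E v j. y $ j)"
    using A_alpha_eigenvector_nth[OF assms(1), of v] by (simp add: algebra_simps)
  also have "\<dots> \<le> (1 - \<alpha>) * (degree E v * m)"
    using sum_mono[of "{j. E v j}" "\<lambda>j. y $ j" "\<lambda>_. m"] assms(2,3)
    by (intro mult_left_mono) (auto simp: degree_def)
  finally show ?thesis using assms(4) by (simp add: field_simps)
qed

lemma A_alpha_eigenvector_neighbours_max:
  fixes E :: "'v::finite \<Rightarrow> 'v \<Rightarrow> bool" and \<alpha> l m :: real
  assumes "A_alpha \<alpha> E *v y = l *\<^sub>R y" "\<And>i. y $ i \<le> m" "\<alpha> < 1" "\<alpha> * degree E v < l"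
    and "y $ v = (1 - \<alpha>) * m * (degree E v / (l - \<alpha> * degree E v))" and "E v w"
  shows "y $ w = m"
proof -
  have "(1 - \<alpha>) * (\<Sum>j | E v j. y $ j) = (l - \<alpha> * degree E v) * y $ v"
    using A_alpha_eigenvector_nth[OF assms(1), of v] by (simp add: algebra_simps)
  also have "\<dots> = (1 - \<alpha>) * (\<Sum>j | E v j. m)"
    using assms(4,5) by (simp add: field_simps degree_def)
  finally have "(\<Sum>j | E v j. m - y $ j) = 0"
    using assms(3) by (simp add: sum_subtractf)
  moreover have "\<And>j. 0 \<le> m - y $ j" using assms(2) by simp
  ultimately show ?thesis using assms(6) by (simp add: sum_nonneg_eq_0_iff)
qed

lemma A_alpha_eigenvector_max_vertex:
  fixes E :: "'v::finite \<Rightarrow> 'v \<Rightarrow> bool" and \<alpha> l :: real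
  assumes eig: "A_alpha \<alpha> E *v y = l *\<^sub>R y" and max: "0 < y $ u" "\<And>i. y $ i \<le> y $ u"
    and "\<alpha> < 1" and dl: "\<And>v. \<alpha> * degree E v < l"
  defines "G \<equiv> (\<Sum>v | E u v. degree E v / (l - \<alpha> * degree E v))"
  shows "l - \<alpha> * degree E u \<le> (1 - \<alpha>)\<^sup>2 * G"
    and "l - \<alpha> * degree E u = (1 - \<alpha>)\<^sup>2 * G \<Longrightarrow> E u v \<Longrightarrow> E v w \<Longrightarrow> y $ w = y $ u"
proof -
  define g where "g v = (1 - \<alpha>) * y $ u * (degree E v / (l - \<alpha> * degree E v))" for v
  have bound: "y $ v \<le> g v" for v
    unfolding g_def using A_alpha_eigenvector_le[OF eig max(2)] assms(4) dl by simp
  have "(l - \<alpha> * degree E u) * y $ u = (1 - \<alpha>) * (\<Sum>v | E u v. y $ v)"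
    using A_alpha_eigenvector_nth[OF eig, of u] by (simp add: algebra_simps)
  moreover have "(1 - \<alpha>) * (\<Sum>v | E u v. g v) = (1 - \<alpha>)\<^sup>2 * G * y $ u"
    unfolding g_def G_def by (simp add: sum_distrib_left power2_eq_square ac_simps)
  ultimately have slack: "((1 - \<alpha>)\<^sup>2 * G - (l - \<alpha> * degree E u)) * y $ u
      = (1 - \<alpha>) * (\<Sum>v | E u v. g v - y $ v)"
    by (simp add: sum_subtractf algebra_simps)
  moreover have "0 \<le> (\<Sum>v | E u v. g v - y $ v)" using bound by (simp add: sum_nonneg)
  ultimately have "0 \<le> ((1 - \<alpha>)\<^sup>2 * G - (l - \<alpha> * degree E u)) * y $ u" using assms(4) by simp
  thus "l - \<alpha> * degree E u \<le> (1 - \<alpha>)\<^sup>2 * G" using max(1) by (simp add: zero_le_mult_iff)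
  assume "l - \<alpha> * degree E u = (1 - \<alpha>)\<^sup>2 * G" "E u v" "E v w"
  hence "(\<Sum>v | E u v. g v - y $ v) = 0" using slack assms(4) by simp
  hence "y $ v = g v" using bound \<open>E u v\<close> by (simp add: sum_nonneg_eq_0_iff)
  thus "y $ w = y $ u"
    using A_alpha_eigenvector_neighbours_max[OF eig max(2) assms(4) dl] \<open>E v w\<close> unfolding g_def by blast
qed

lemma successively_iff_nth:
  "successively P xs \<longleftrightarrow> (\<forall>i. Suc i < length xs \<longrightarrow> P (xs ! i) (xs ! Suc i))"
  by (induction P xs rule: successively.induct) (auto simp: nth_Cons' less_Suc_eq_0_disj)

lemma is_cycle_iff:
  "is_cycle E vs \<longleftrightarrow> 3 \<le> length vs \<and> distinct vs \<and> successively E vs \<and> E (last vs) (hd vs)"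
  by (simp add: is_cycle_def successively_iff_nth)

lemma degree_le_card_minus_one:
  fixes E :: "'v::finite \<Rightarrow> 'v \<Rightarrow> bool"
  assumes "irreflp E"
  shows "degree E u \<le> CARD('v) - 1"
proof -
  have "{v. E u v} \<subseteq> UNIV - {u}" using assms by (auto simp: irreflp_def)
  hence "card {v. E u v} \<le> card (UNIV - {u})" by (intro card_mono) auto
  thus ?thesis unfolding degree_def by (simp add: card_Diff_singleton)
qed

lemma degree_pos_if_connected:
  fixes E :: "'v::finite \<Rightarrow> 'v \<Rightarrow> bool"
  assumes "connected_graph E" and "2 \<le> CARD('v)"
  shows "1 \<le> degree E u"
proof -
  have "card (UNIV :: 'v set) \<noteq> card {u}" using assms(2) by simp
  hence "UNIV \<noteq> {u}" by metis
  then obtain w where "w \<noteq> u" by blast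
  moreover have "E\<^sup>*\<^sup>* u w" using assms(1) unfolding connected_graph_def by blast
  ultimately obtain z where "E u z" by (metis converse_rtranclpE)
  thus ?thesis unfolding degree_def by (auto simp: Suc_le_eq card_gt_0_iff)
qed

definition ball2 :: "('v \<Rightarrow> 'v \<Rightarrow> bool) \<Rightarrow> 'v \<Rightarrow> 'v set" where
  "ball2 E u = {w. w = u \<or> E u w \<or> (\<exists>v. E u v \<and> E v w)}"

context
  fixes T :: "'v::finite \<Rightarrow> 'v \<Rightarrow> bool"
  assumes tree: "is_tree T"
begin

lemma tree_sym: "T u v \<Longrightarrow> T v u"
  using tree unfolding is_tree_def simple_graph_def by blast

lemma tree_irrefl: "\<not> T u u"
  using tree unfolding is_tree_def simple_graph_def by blast

lemma tree_no_cycle: "\<not> is_cycle T vs"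
  using tree unfolding is_tree_def by blast

lemma tree_degree_le: "degree T v \<le> CARD('v) - 1"
  using tree_irrefl by (intro degree_le_card_minus_one irreflpI)

lemma tree_degree_ge_1: "2 \<le> CARD('v) \<Longrightarrow> 1 \<le> degree T v"
  using tree unfolding is_tree_def by (intro degree_pos_if_connected) auto

lemma tree_is_star_if_adjacent_to_all:
  assumes "\<And>v. v \<noteq> c \<Longrightarrow> T c v"
  shows "is_star T"
  unfolding is_star_def
proof (intro exI[of _ c] allI iffI)
  fix a b assume ab: "T a b"
  have "is_cycle T [c, a, b]" if "a \<noteq> c" "b \<noteq> c"
  proof -
    have "a \<noteq> b" using ab tree_irrefl by blast
    thus ?thesis using that ab assms tree_sym by (simp add: is_cycle_iff)
  qed
  thus "a \<noteq> b \<and> (a = c \<or> b = c)" using ab tree_no_cycle tree_irrefl by blast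
qed (use assms tree_sym in fastforce)

lemma tree_is_star_if_degree:
  assumes "degree T c = CARD('v) - 1"
  shows "is_star T"
proof -
  have sub: "{v. T c v} \<subseteq> UNIV - {c}" using tree_irrefl by auto
  moreover have "card {v. T c v} = card (UNIV - {c})"
    using assms unfolding degree_def by (simp add: card_Diff_singleton)
  ultimately have "{v. T c v} = UNIV - {c}" by (intro card_subset_eq) auto
  thus ?thesis using tree_is_star_if_adjacent_to_all[of c] by blast
qed

text \<open>Trees have no triangles and no 4-cycles, so each vertex at distance two from \<open>u\<close>
  is counted once by the degrees of the neighbours of \<open>u\<close>, each of which also counts \<open>u\<close>.\<close>
lemma tree_card_ball2:
  shows "card (ball2 T u) = 1 + (\<Sum>v | T u v. degree T v)"
proof -
  define N where "N = {v. T u v}"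
  define S where "S v = {w. T v w} - {u}" for v
  note irr = tree_irrefl and sym = tree_sym and acyclic = tree_no_cycle
  have ball: "ball2 T u = insert u (N \<union> (\<Union>v\<in>N. S v))"
    unfolding ball2_def N_def S_def by auto
  have "N \<inter> (\<Union>v\<in>N. S v) = {}"
  proof (rule ccontr)
    assume "N \<inter> (\<Union>v\<in>N. S v) \<noteq> {}"
    then obtain v w where "T u v" "T u w" "T v w" "w \<noteq> u" unfolding N_def S_def by blast
    hence "is_cycle T [u, v, w]" using irr sym by (simp add: is_cycle_iff) metis
    thus False using acyclic by blast
  qed
  moreover have "S v \<inter> S v' = {}" if "v \<in> N" "v' \<in> N" "v \<noteq> v'" for v v'
  proof (rule ccontr)
    assume "S v \<inter> S v' \<noteq> {}"
    then obtain w where "T v w" "T v' w" "w \<noteq> u" unfolding S_def by blast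
    hence "is_cycle T [u, v, w, v']" using that irr sym unfolding N_def by (simp add: is_cycle_iff) metis
    thus False using acyclic by blast
  qed
  moreover have "u \<notin> N \<union> (\<Union>v\<in>N. S v)" using irr unfolding N_def S_def by auto
  moreover have deg: "card (S v) + 1 = degree T v" if "v \<in> N" for v
  proof -
    have "u \<in> {w. T v w}" using that sym unfolding N_def by blast
    hence "card {w. T v w} > 0" by (auto simp: card_gt_0_iff)
    thus ?thesis using \<open>u \<in> {w. T v w}\<close> unfolding S_def degree_def by (simp add: card_Diff_singleton)
  qed
  ultimately have "card (ball2 T u) = 1 + card N + (\<Sum>v\<in>N. card (S v))"
    unfolding ball by (simp add: card_Un_disjoint card_UN_disjoint)
  also have "\<dots> = 1 + (\<Sum>v\<in>N. card (S v) + 1)" by (simp add: sum_Suc)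
  also have "\<dots> = 1 + (\<Sum>v\<in>N. degree T v)" using deg by simp
  finally show ?thesis unfolding N_def .
qed

lemma tree_neighbour_degree_sum_le:
  shows "(\<Sum>v | T u v. degree T v) \<le> CARD('v) - 1"
  using card_mono[of UNIV "ball2 T u"] tree_card_ball2[of u] by simp

lemma tree_ball2_eq_UNIV:
  assumes "(\<Sum>v | T u v. degree T v) = CARD('v) - 1"
  shows "ball2 T u = UNIV"
proof -
  have "card (ball2 T u) = CARD('v)"
    using tree_card_ball2[of u] assms by (simp add: Suc_leI)
  thus ?thesis by (simp add: card_eq_UNIV_imp_eq_UNIV)
qed

lemma tree_unique_neighbour_if_ball2_UNIV:
  assumes "ball2 T w = UNIV" and "T u v" "T v w" "u \<noteq> w" "\<not> T u w" "T u z"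
  shows "z = v"
proof (rule ccontr)
  assume "z \<noteq> v"
  have "z \<noteq> w" "z \<noteq> u" using assms tree_irrefl by blast+
  have "z \<in> ball2 T w" using assms(1) by blast
  then consider "T w z" | z' where "T w z'" "T z' z"
    using \<open>z \<noteq> w\<close> tree_sym unfolding ball2_def by blast
  then obtain vs where "is_cycle T vs"
  proof cases
    case 1
    then show ?thesis
      using that[of "[u, v, w, z]"] assms \<open>z \<noteq> v\<close> \<open>z \<noteq> w\<close> \<open>z \<noteq> u\<close> tree_sym tree_irrefl
      by (simp add: is_cycle_iff) metis
  next
    case (2 z')
    show ?thesis
    proof (cases "z' = v")
      case True
      then show ?thesis
        using that[of "[u, v, z]"] 2 assms \<open>z \<noteq> v\<close> \<open>z \<noteq> u\<close> tree_sym
        by (simp add: is_cycle_iff) metis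
    next
      case False
      have "z' \<noteq> u" "z' \<noteq> w" "z' \<noteq> z" using 2 assms tree_sym tree_irrefl by blast+
      then show ?thesis
        using that[of "[u, v, w, z', z]"] 2 False assms \<open>z \<noteq> v\<close> \<open>z \<noteq> w\<close> \<open>z \<noteq> u\<close> tree_sym tree_irrefl
        by (simp add: is_cycle_iff) metis
    qed
  qed
  thus False using tree_no_cycle by blast
qed

lemma tree_is_star_if_ball2_UNIV:
  assumes "ball2 T u = UNIV" "ball2 T w = UNIV" and "T u v" "T v w" "u \<noteq> w" "\<not> T u w"
  shows "is_star T"
proof (rule tree_is_star_if_adjacent_to_all)
  fix y assume "y \<noteq> v"
  have leaf: "z = v" if "T u z" for z
    using tree_unique_neighbour_if_ball2_UNIV assms that by blast
  have "y \<in> ball2 T u" using assms(1) by blast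
  thus "T v y" using \<open>y \<noteq> v\<close> assms(3) tree_sym leaf unfolding ball2_def by blast
qed

end

lemma (in star_quadratic) tree_eigenvalue_poly_nonpos:
  fixes T :: "'v::finite \<Rightarrow> 'v \<Rightarrow> bool"
  assumes tree: "is_tree T" and N: "N = real CARD('v) - 1" and "1 < N" "\<alpha> < 1" "\<alpha> * N < l"
    and eig: "A_alpha \<alpha> T *v y = l *\<^sub>R y" and max: "0 < y $ u" "\<And>i. y $ i \<le> y $ u"
  shows "poly l \<le> 0"
    and "poly l = 0 \<Longrightarrow> ball2 T u = UNIV \<and> (\<forall>v w. T u v \<longrightarrow> T v w \<longrightarrow> y $ w = y $ u)"
proof -
  define d where "d v = real (degree T v)" for v
  have card: "real (CARD('v) - 1) = N" using N by (simp add: Suc_leI)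
  have deg: "1 \<le> d v \<and> d v \<le> N" for v
  proof -
    have "2 \<le> CARD('v)" using N assms(3) by simp
    hence "1 \<le> degree T v" by (rule tree_degree_ge_1[OF tree])
    moreover have "real (degree T v) \<le> real (CARD('v) - 1)"
      using tree_degree_le[OF tree] by (simp only: of_nat_le_iff)
    ultimately show ?thesis unfolding d_def card by simp
  qed
  have "\<alpha> * d v < l" for v
    using mult_left_mono[of "d v" N \<alpha>] deg alpha_nonneg assms(5) by simp
  note at_u = A_alpha_eigenvector_max_vertex[OF eig max assms(4) this[unfolded d_def]]
  have "sum d {v. T u v} \<le> N"
    using tree_neighbour_degree_sum_le[OF tree, of u] unfolding d_def card[symmetric]
    by (simp only: of_nat_le_iff flip: of_nat_sum)
  note estimate = neighbour_degree_estimate[where V = "{v. T u v}" and d = d, OF _ assms(3,4,5) deg this]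
  note estimate = estimate[unfolded d_def degree_def[of T u, symmetric], OF _ at_u(1)]
  show "poly l \<le> 0" using estimate(1) by simp
  assume "poly l = 0"
  with estimate(2) have "real (\<Sum>v | T u v. degree T v) = N" and
    equality: "l - \<alpha> * degree T u = (1 - \<alpha>)\<^sup>2 * (\<Sum>v | T u v. degree T v / (l - \<alpha> * degree T v))"
    by auto
  hence "ball2 T u = UNIV"
    using tree_ball2_eq_UNIV[OF tree] unfolding card[symmetric] by (simp only: of_nat_eq_iff)
  thus "ball2 T u = UNIV \<and> (\<forall>v w. T u v \<longrightarrow> T v w \<longrightarrow> y $ w = y $ u)"
    using at_u(2)[OF equality] by blast
qed

lemma (in star_quadratic) tree_eigenvalue_le_root:
  fixes T :: "'v::finite \<Rightarrow> 'v \<Rightarrow> bool"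
  assumes tree: "is_tree T" and N: "N = real CARD('v) - 1"
    and eig: "A_alpha \<alpha> T *v y = l *\<^sub>R y" and max: "0 < y $ u" "\<And>i. y $ i \<le> y $ u"
  shows "l \<le> root" and "l = root \<Longrightarrow> is_star T"
proof -
  have card: "real (CARD('v) - 1) = N" using N by (simp add: Suc_leI)
  consider "\<alpha> = 1 \<or> N = 1" | "\<alpha> < 1" "1 < N" using alpha_le_1 N_ge_1 by linarith
  hence "l \<le> root \<and> (l = root \<longrightarrow> is_star T)"
  proof cases
    case 1
    have "l \<le> degree T u" using A_alpha_eigenvalue_le_degree[OF eig max alpha_le_1] .
    moreover have "degree T u \<le> CARD('v) - 1" by (rule tree_degree_le[OF tree])
    moreover have "degree T u = CARD('v) - 1 \<Longrightarrow> is_star T" by (rule tree_is_star_if_degree[OF tree])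
    ultimately show ?thesis using root_eq_N[OF 1] card by (metis of_nat_le_iff of_nat_eq_iff order.trans le_antisym)
  next
    case 2
    note estimate = tree_eigenvalue_poly_nonpos[OF tree N 2(2,1) _ eig]
    have "l \<le> root"
      using root_gt[OF 2(1)] estimate(1)[OF _ max] le_root_if_poly_nonpos by force
    moreover have "is_star T" if "l = root"
    proof (cases "\<forall>w. w \<noteq> u \<longrightarrow> T u w")
      case True
      then show ?thesis using tree_is_star_if_adjacent_to_all[OF tree, of u] by blast
    next
      case False
      then obtain w where w: "w \<noteq> u" "\<not> T u w" by blast
      have at_root: "\<alpha> * N < l" "poly l = 0" using root_gt[OF 2(1)] poly_root that by simp_all
      note at_u = estimate(2)[OF at_root(1) max at_root(2)]
      obtain v where v: "T u v" "T v w"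
        using at_u w unfolding ball2_def by blast
      have "y $ w = y $ u" using at_u v by blast
      hence "ball2 T w = UNIV" using estimate(2)[OF at_root(1), of w] max at_root(2) by simp
      then show ?thesis using tree_is_star_if_ball2_UNIV[OF tree] at_u v w by blast
    qed
    ultimately show ?thesis by blast
  qed
  thus "l \<le> root" and "l = root \<Longrightarrow> is_star T" by blast+
qed

lemma (in star_quadratic) star_has_eigenvalue_root:
  fixes T :: "'v::finite \<Rightarrow> 'v \<Rightarrow> bool"
  assumes "is_star T" and N: "N = real CARD('v) - 1"
  shows "\<exists>x. x \<noteq> 0 \<and> A_alpha \<alpha> T *v x = root *\<^sub>R x"
proof -
  obtain c where c: "\<And>u v. T u v \<longleftrightarrow> u \<noteq> v \<and> (u = c \<or> v = c)"
    using assms(1) unfolding is_star_def by blast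
  have nbr_c: "{j. T c j} = UNIV - {c}" and nbr: "\<And>i. i \<noteq> c \<Longrightarrow> {j. T i j} = {c}"
    using c by auto
  have card: "real (card (UNIV - {c})) = N" using N by (simp add: card_Diff_singleton Suc_leI)
  have deg_c: "degree T c = N" and deg: "\<And>i. i \<noteq> c \<Longrightarrow> degree T i = 1"
    unfolding degree_def nbr_c card by (simp_all add: nbr)
  have "0 < card (UNIV - {c})" using card N_ge_1 by simp
  then obtain j where "j \<noteq> c" unfolding card_gt_0_iff by blast
  show ?thesis
  proof (cases "\<alpha> = 1")
    case True
    define x :: "real^'v" where "x = (\<chi> i. if i = c then 1 else 0)"
    have "x \<noteq> 0" by (auto simp: x_def vec_eq_iff)
    moreover have "A_alpha \<alpha> T *v x = root *\<^sub>R x"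
      using True root_eq_N deg_c by (auto simp: vec_eq_iff A_alpha_mult_vec_nth x_def)
    ultimately show ?thesis by blast
  next
    case False
    define x :: "real^'v" where "x = (\<chi> i. if i = c then root - \<alpha> else 1 - \<alpha>)"
    have "x \<noteq> 0" using \<open>j \<noteq> c\<close> False by (auto simp: x_def vec_eq_iff)
    moreover have "A_alpha \<alpha> T *v x = root *\<^sub>R x"
    proof (rule iffD2[OF vec_eq_iff], intro allI)
      fix i
      show "(A_alpha \<alpha> T *v x) $ i = (root *\<^sub>R x) $ i"
      proof (cases "i = c")
        case True
        have "(root - \<alpha>) * (root - \<alpha> * N) = (1 - \<alpha>)\<^sup>2 * N" using poly_root unfolding poly_def by simp
        hence "\<alpha> * N * (root - \<alpha>) + (1 - \<alpha>) * (N * (1 - \<alpha>)) = root * (root - \<alpha>)"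
          by (simp add: algebra_simps power2_eq_square)
        then show ?thesis using True card by (simp add: A_alpha_mult_vec_nth nbr_c deg_c x_def)
      next
        case False
        then show ?thesis by (simp add: A_alpha_mult_vec_nth nbr deg x_def algebra_simps)
      qed
    qed
    ultimately show ?thesis by blast
  qed
qed

theorem theorem2:
  fixes T :: "'v::finite \<Rightarrow> 'v \<Rightarrow> bool" and \<alpha> :: real
  assumes "CARD('v) \<ge> 2" and "0 \<le> \<alpha>" and "\<alpha> \<le> 1" and "is_tree T"
  shows "spectral_radius_sym (A_alpha \<alpha> T)
           \<le> (\<alpha> * real CARD('v) + sqrt (\<alpha>\<^sup>2 * (real CARD('v))\<^sup>2
                + 4 * (real CARD('v) - 1) * (1 - 2 * \<alpha>))) / 2
    \<and> (spectral_radius_sym (A_alpha \<alpha> T)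
           = (\<alpha> * real CARD('v) + sqrt (\<alpha>\<^sup>2 * (real CARD('v))\<^sup>2
                + 4 * (real CARD('v) - 1) * (1 - 2 * \<alpha>))) / 2
         \<longleftrightarrow> is_star T)"
proof -
  define N where "N = real CARD('v) - 1"
  interpret star_quadratic N \<alpha> using assms(1-3) by unfold_locales (simp_all add: N_def)
  have root: "(\<alpha> * real CARD('v) + sqrt (\<alpha>\<^sup>2 * (real CARD('v))\<^sup>2
                + 4 * (real CARD('v) - 1) * (1 - 2 * \<alpha>))) / 2 = root"
    unfolding root_def discr_def by (simp add: N_def)
  have sym: "transpose (A_alpha \<alpha> T) = A_alpha \<alpha> T"
    using tree_sym[OF assms(4)] by (intro A_alpha_symmetric sympI)
  obtain x where "x \<noteq> 0" "A_alpha \<alpha> T *v x = spectral_radius_sym (A_alpha \<alpha> T) *\<^sub>R x"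
    using spectral_radius_sym_eigenvalue(1)[OF sym] by blast
  then obtain y u where "A_alpha \<alpha> T *v y = spectral_radius_sym (A_alpha \<alpha> T) *\<^sub>R y"
      "0 < y $ u" "\<And>i. y $ i \<le> y $ u"
    using eigenvector_with_positive_maximum by blast
  note bound = tree_eigenvalue_le_root[OF assms(4) N_def this]
  have "is_star T \<Longrightarrow> root \<le> spectral_radius_sym (A_alpha \<alpha> T)"
    using star_has_eigenvalue_root[OF _ N_def] spectral_radius_sym_eigenvalue(2)[OF sym] by blast
  thus ?thesis unfolding root using bound by force
qed

end
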